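(* Let $n$ be a positive integer and let $\mathcal F$ be an $\mathcal N$-saturated family of subsets of $[n]$. Let $B'\subseteq[n]$ with $B'\notin\mathcal F$, and suppose there exists $B\in\mathcal F$ with $B\subset B'$, and that $B'$ is a minimal element of some induced copy of $\mathcal N$ in $\mathcal F\cup\{B'\}$. Then there exists an induced copy of $\mathcal N$ in $\mathcal F\cup\{B'\}$ in which $B'$ is a minimal element and the other minimal element contains $B$ as a subset.
   Context: The poset $\mathcal N$ has four elements $a,b,c,d$ with $a<c$, $b<c$, $b<d$ and no other comparabilities (so $a,b$ are its minimal elements and $c,d$ its maximal elements). A family $\mathcal Q$ of sets (ordered by inclusion) contains an induced copy of $\mathcal N$ if there are distinct sets in $\mathcal Q$ whose inclusion relations are exactly those of $a,b,c,d$ above. A family $\mathcal F$ of subsets of $[n]=\{1,\dots,n\}$ is $\mathcal N$-saturated if $\mathcal F$ contains no induced copy of $\mathcal N$, but for every $S\subseteq[n]$ with $S\notin\mathcal F$, the family $\mathcal F\cup\{S\}$ contains an induced copy of $\mathcal N$. *)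

theory Defs
  imports Main
begin

definition induced_N :: "'a set set \<Rightarrow> 'a set \<Rightarrow> 'a set \<Rightarrow> 'a set \<Rightarrow> 'a set \<Rightarrow> bool" where
  "induced_N Q a b c d \<longleftrightarrow>
     a \<in> Q \<and> b \<in> Q \<and> c \<in> Q \<and> d \<in> Q \<and>
     a \<noteq> b \<and> a \<noteq> c \<and> a \<noteq> d \<and> b \<noteq> c \<and> b \<noteq> d \<and> c \<noteq> d \<and>
     a \<subset> c \<and> b \<subset> c \<and> b \<subset> d \<and>
     \<not> a \<subseteq> b \<and> \<not> b \<subseteq> a \<and>
     \<not> a \<subseteq> d \<and> \<not> d \<subseteq> a \<and>
     \<not> c \<subseteq> d \<and> \<not> d \<subseteq> c \<and>
     \<not> c \<subseteq> a \<and> \<not> c \<subseteq> b \<and> \<not> d \<subseteq> b"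

definition contains_induced_N :: "'a set set \<Rightarrow> bool" where
  "contains_induced_N Q \<longleftrightarrow> (\<exists>a b c d. induced_N Q a b c d)"

definition N_saturated :: "nat \<Rightarrow> nat set set \<Rightarrow> bool" where
  "N_saturated n F \<longleftrightarrow>
     F \<subseteq> Pow {1..n} \<and> \<not> contains_induced_N F \<and>
     (\<forall>S. S \<subseteq> {1..n} \<and> S \<notin> F \<longrightarrow> contains_induced_N (insert S F))"

end

theory Submission
  imports Defs
begin

text \<open>
  Let \<open>(a, b, c, d)\<close> be a copy of \<open>\<N>\<close> in \<open>\<F> \<union> {B'}\<close> containing \<open>B'\<close>. Since \<open>\<F>\<close> is
  \<open>\<N>\<close>-free, replacing \<open>B'\<close> by its subset \<open>B \<in> \<F>\<close> must destroy the copy. If \<open>B'\<close> plays \<open>b\<close>,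
  this forces \<open>B \<subseteq> a\<close>. If \<open>B'\<close> plays \<open>a\<close>, it forces \<open>B \<subseteq> d\<close>,
  and then \<open>b\<close> can be enlarged to \<open>J = \<Union>{y \<in> \<F>. y \<subseteq> c \<inter> d}\<close>, which contains \<open>B\<close>.
  Saturation gives \<open>J \<in> \<F>\<close>: adding such a meet \<open>J\<close> of two members \<open>U, V\<close> to an
  \<open>\<N>\<close>-free family creates no copy of \<open>\<N>\<close>, because in each of the four roles \<open>J\<close> could be
  exchanged for a member of \<open>\<F>\<close>: some \<open>y \<subseteq> U \<inter> V\<close> in the minimal roles, \<open>U\<close> or \<open>V\<close> in
  the maximal ones.
\<close>

lemma induced_N_iff:
  "induced_N Q a b c d \<longleftrightarrow> a \<in> Q \<and> b \<in> Q \<and> c \<in> Q \<and> d \<in> Q \<and> a \<subset> c \<and> b \<subset> c \<and> b \<subset> d \<and>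
     \<not> a \<subseteq> b \<and> \<not> b \<subseteq> a \<and> \<not> a \<subseteq> d \<and> \<not> d \<subseteq> a \<and> \<not> c \<subseteq> d \<and> \<not> d \<subseteq> c"
  unfolding induced_N_def by auto

lemma induced_N_shrink_a:
  assumes N: "induced_N Q a b c d" and "a' \<in> Q" "a' \<subseteq> a" "\<not> a' \<subseteq> d"
  shows "induced_N Q a' b c d"
proof -
  have "a' \<subset> c" "\<not> a' \<subseteq> b" "\<not> b \<subseteq> a'" "\<not> d \<subseteq> a'"
    using N assms(3,4) unfolding induced_N_iff by blast+
  with N assms(2,4) show ?thesis by (simp add: induced_N_iff)
qed

lemma induced_N_shrink_b:
  assumes N: "induced_N Q a b c d" and "b' \<in> Q" "b' \<subseteq> b" "\<not> b' \<subseteq> a"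
  shows "induced_N Q a b' c d"
proof -
  have "b' \<subset> c" "b' \<subset> d" "\<not> a \<subseteq> b'"
    using N assms(3) unfolding induced_N_iff by blast+
  with N assms(2,4) show ?thesis by (simp add: induced_N_iff)
qed

lemma induced_N_enlarge_b:
  assumes N: "induced_N Q a b c d" and "b' \<in> Q" "b \<subseteq> b'" "b' \<subseteq> c" "b' \<subseteq> d"
  shows "induced_N Q a b' c d"
proof -
  have "b' \<subset> c" "b' \<subset> d" "\<not> a \<subseteq> b'" "\<not> b' \<subseteq> a"
    using N assms(3-5) unfolding induced_N_iff by blast+
  with N assms(2) show ?thesis by (simp add: induced_N_iff)
qed

lemma induced_N_enlarge_c:
  assumes N: "induced_N Q a b c d" and "c' \<in> Q" "c \<subseteq> c'" "\<not> d \<subseteq> c'"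
  shows "induced_N Q a b c' d"
proof -
  have "a \<subset> c'" "b \<subset> c'" "\<not> c' \<subseteq> d"
    using N assms(3,4) unfolding induced_N_iff by blast+
  with N assms(2,4) show ?thesis by (simp add: induced_N_iff)
qed

lemma induced_N_enlarge_d:
  assumes N: "induced_N Q a b c d" and "d' \<in> Q" "d \<subseteq> d'" "\<not> a \<subseteq> d'"
  shows "induced_N Q a b c d'"
proof -
  have "b \<subset> d'" "\<not> d' \<subseteq> a" "\<not> c \<subseteq> d'" "\<not> d' \<subseteq> c"
    using N assms(3,4) unfolding induced_N_iff by blast+
  with N assms(2,4) show ?thesis by (simp add: induced_N_iff)
qed

lemma induced_N_remove_insert:
  assumes "induced_N (insert S Q) a b c d" "S \<notin> {a, b, c, d}"
  shows "induced_N Q a b c d"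
  using assms unfolding induced_N_iff by (simp add: eq_commute[of S])

lemma induced_N_distinct:
  assumes "induced_N Q a b c d"
  shows "distinct [a, b, c, d]"
  using assms unfolding induced_N_def by simp

lemma N_free_insert_copy_mem:
  assumes "\<not> contains_induced_N F" "induced_N (insert S F) a b c d"
  shows "S \<in> {a, b, c, d}"
  using assms induced_N_remove_insert unfolding contains_induced_N_def by blast

lemma N_free_insert_copy_a_role:
  assumes free: "\<not> contains_induced_N F" and N: "induced_N (insert S F) S b c d"
    and "B \<in> F" "B \<subset> S"
  shows "B \<subseteq> d"
proof (rule ccontr)
  assume "\<not> B \<subseteq> d"
  with assms(3,4) have "induced_N (insert S F) B b c d"
    by (intro induced_N_shrink_a[OF N]) auto
  moreover have "S \<notin> {B, b, c, d}"
    using induced_N_distinct[OF N] assms(4) by auto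
  ultimately show False
    using N_free_insert_copy_mem[OF free] by blast
qed

lemma N_free_insert_copy_b_role:
  assumes free: "\<not> contains_induced_N F" and N: "induced_N (insert S F) a S c d"
    and "B \<in> F" "B \<subset> S"
  shows "B \<subseteq> a"
proof (rule ccontr)
  assume "\<not> B \<subseteq> a"
  with assms(3,4) have "induced_N (insert S F) a B c d"
    by (intro induced_N_shrink_b[OF N]) auto
  moreover have "S \<notin> {a, B, c, d}"
    using induced_N_distinct[OF N] assms(4) by auto
  ultimately show False
    using N_free_insert_copy_mem[OF free] by blast
qed

lemma N_free_insert_copy_c_role:
  assumes free: "\<not> contains_induced_N F" and N: "induced_N (insert S F) a b S d"
    and "W \<in> F" "S \<subset> W"
  shows "d \<subseteq> W"
proof (rule ccontr)
  assume "\<not> d \<subseteq> W"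
  with assms(3,4) have "induced_N (insert S F) a b W d"
    by (intro induced_N_enlarge_c[OF N]) auto
  moreover have "S \<notin> {a, b, W, d}"
    using induced_N_distinct[OF N] assms(4) by auto
  ultimately show False
    using N_free_insert_copy_mem[OF free] by blast
qed

lemma N_free_insert_copy_d_role:
  assumes free: "\<not> contains_induced_N F" and N: "induced_N (insert S F) a b c S"
    and "W \<in> F" "S \<subset> W"
  shows "a \<subseteq> W"
proof (rule ccontr)
  assume "\<not> a \<subseteq> W"
  with assms(3,4) have "induced_N (insert S F) a b c W"
    by (intro induced_N_enlarge_d[OF N]) auto
  moreover have "S \<notin> {a, b, c, W}"
    using induced_N_distinct[OF N] assms(4) by auto
  ultimately show False
    using N_free_insert_copy_mem[OF free] by blast
qed

lemma N_free_insert_meet: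
  assumes free: "\<not> contains_induced_N F" and "U \<in> F" "V \<in> F"
  shows "\<not> contains_induced_N (insert (\<Union>{y \<in> F. y \<subseteq> U \<inter> V}) F)"
proof -
  define J where "J = \<Union>{y \<in> F. y \<subseteq> U \<inter> V}"
  have "\<not> contains_induced_N (insert J F)"
  proof
    assume "contains_induced_N (insert J F)"
    then obtain a b c d where N: "induced_N (insert J F) a b c d"
      unfolding contains_induced_N_def by blast
    have J_notin: "J \<notin> F"
    proof
      assume "J \<in> F"
      with N have "induced_N F a b c d" by (simp add: insert_absorb)
      with free show False unfolding contains_induced_N_def by blast
    qed
    have below_J: "y \<subset> J" if "y \<in> F" "y \<subseteq> U \<inter> V" for y
      using that J_notin unfolding J_def by blast
    have "J \<subseteq> U" "J \<subseteq> V"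
      unfolding J_def by blast+
    with assms(2,3) J_notin have above_J: "J \<subset> U" "J \<subset> V"
      by auto
    have mem: "a \<in> insert J F" "d \<in> insert J F"
      and ab: "\<not> a \<subseteq> b" "\<not> b \<subseteq> a" and ad: "\<not> a \<subseteq> d" and cd: "\<not> d \<subseteq> c"
      using N by (simp_all add: induced_N_iff)
    have dist: "distinct [a, b, c, d]"
      using N by (rule induced_N_distinct)
    consider "a = J" | "b = J" | "c = J" | "d = J"
      using N_free_insert_copy_mem[OF free N] by blast
    then show False
    proof cases
      case 1
      with N_free_insert_copy_a_role[OF free N[unfolded 1]] below_J have "J \<subseteq> d"
        unfolding J_def by blast
      with 1 ad show False by blast
    next
      case 2
      with N_free_insert_copy_b_role[OF free N[unfolded 2]] below_J have "J \<subseteq> a"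
        unfolding J_def by blast
      with 2 ab show False by blast
    next
      case 3
      with N_free_insert_copy_c_role[OF free N[unfolded 3]] assms(2,3) above_J
      have "d \<subseteq> U \<inter> V" by blast
      moreover have "d \<in> F"
        using mem dist 3 by auto
      ultimately have "d \<subseteq> J"
        unfolding J_def by blast
      with 3 cd show False by blast
    next
      case 4
      with N_free_insert_copy_d_role[OF free N[unfolded 4]] assms(2,3) above_J
      have "a \<subseteq> U \<inter> V" by blast
      moreover have "a \<in> F"
        using mem dist 4 by auto
      ultimately have "a \<subseteq> J"
        unfolding J_def by blast
      with 4 ad show False by blast
    qed
  qed
  then show ?thesis
    unfolding J_def .
qed

lemma N_saturated_meet_mem:
  assumes sat: "N_saturated n F" and "U \<in> F" "V \<in> F"
  shows "\<Union>{y \<in> F. y \<subseteq> U \<inter> V} \<in> F"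
proof (rule ccontr)
  assume "\<Union>{y \<in> F. y \<subseteq> U \<inter> V} \<notin> F"
  moreover have "\<Union>{y \<in> F. y \<subseteq> U \<inter> V} \<subseteq> {1..n}"
    using sat assms(2) unfolding N_saturated_def by blast
  ultimately have "contains_induced_N (insert (\<Union>{y \<in> F. y \<subseteq> U \<inter> V}) F)"
    using sat unfolding N_saturated_def by blast
  moreover have "\<not> contains_induced_N F"
    using sat unfolding N_saturated_def by blast
  ultimately show False
    using N_free_insert_meet assms(2,3) by blast
qed

theorem lemma3p2:
  fixes n :: nat and F :: "nat set set" and B B' :: "nat set"
  assumes "n > 0"
    and "N_saturated n F"
    and "B' \<subseteq> {1..n}" and "B' \<notin> F"
    and "B \<in> F" and "B \<subset> B'"
    and "\<exists>x c d. induced_N (insert B' F) B' x c d \<or> induced_N (insert B' F) x B' c d"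
  shows "\<exists>x c d. (induced_N (insert B' F) B' x c d \<or> induced_N (insert B' F) x B' c d)
                 \<and> B \<subseteq> x"
proof -
  have free: "\<not> contains_induced_N F"
    using assms(2) unfolding N_saturated_def by blast
  obtain x c d where "induced_N (insert B' F) B' x c d \<or> induced_N (insert B' F) x B' c d"
    using assms(7) by blast
  then show ?thesis
  proof
    assume N: "induced_N (insert B' F) x B' c d"
    with N_free_insert_copy_b_role[OF free N assms(5,6)] show ?thesis by blast
  next
    assume N: "induced_N (insert B' F) B' x c d"
    define J where "J = \<Union>{y \<in> F. y \<subseteq> c \<inter> d}"
    have "x \<in> F" "c \<in> F" "d \<in> F" "x \<subset> c" "x \<subset> d"
      using N induced_N_distinct[OF N] unfolding induced_N_iff by auto
    with assms(2) have "J \<in> F"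
      unfolding J_def by (intro N_saturated_meet_mem) auto
    with \<open>x \<in> F\<close> \<open>x \<subset> c\<close> \<open>x \<subset> d\<close> have "induced_N (insert B' F) B' J c d"
      unfolding J_def by (intro induced_N_enlarge_b[OF N]) auto
    moreover have "B \<subseteq> J"
      using N_free_insert_copy_a_role[OF free N assms(5,6)] assms(5,6) N
      unfolding J_def induced_N_iff by auto
    ultimately show ?thesis by blast
  qed
qed

end
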